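(* Let $\mathcal{A}=\{\mathcal{U}_n\}_{n\in\mathbb{N}}$ be a defining sequence of a space $X$. Then $\mathcal{A}$ equipped with the ultrametric $u_{\mathcal{A}}$ is tame. Furthermore, $\mathcal{A}$ equipped with an admissible metric $d$ is tame if and only if $d$ is uniformly equivalent to $u_{\mathcal{A}}$.
   Context: Spaces are nonempty separable metrizable. A partition is a cover by pairwise disjoint nonempty clopen sets; $\mathcal{U}[x]$ is the element of $\mathcal{U}$ containing $x$. A defining sequence is a sequence $\{\mathcal{U}_n\}$ of partitions, each refining the previous, whose union is a basis of the topology. $u_{\mathcal{A}}(x,y)=1/(1+j)$ with $j=\inf\{n:\mathcal{U}_n[x]\ne\mathcal{U}_n[y]\}$ ($u_{\mathcal{A}}(x,x)=0$). $\mathcal{A}$ with a metric $d$ is tame if $S_n=\sup\{\operatorname{diam}_d(O):O\in\mathcal{U}_n\}\to0$ and for each $n$ there is $\rho_n>0$ with $d(x_1,x_2)\ge\rho_n$ whenever $x_1,x_2$ are in distinct elements of $\mathcal{U}_n$. Metrics $d_1,d_2$ are uniformly equivalent if the identity maps $(X,d_1)\to(X,d_2)$ and $(X,d_2)\to(X,d_1)$ are uniformly continuous. *)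

theory Defs
  imports "HOL-Analysis.Analysis"
begin

definition is_partition :: "'a topology \<Rightarrow> 'a set set \<Rightarrow> bool" where
  "is_partition X \<U> \<longleftrightarrow>
     \<Union>\<U> = topspace X \<and>
     (\<forall>C\<in>\<U>. C \<noteq> {} \<and> openin X C \<and> closedin X C) \<and>
     (\<forall>C1\<in>\<U>. \<forall>C2\<in>\<U>. C1 \<noteq> C2 \<longrightarrow> C1 \<inter> C2 = {})"

definition cell :: "'a set set \<Rightarrow> 'a \<Rightarrow> 'a set" where
  "cell \<U> x = (THE C. C \<in> \<U> \<and> x \<in> C)"

definition refines :: "'a set set \<Rightarrow> 'a set set \<Rightarrow> bool" where
  "refines \<V> \<U> \<longleftrightarrow> (\<forall>V\<in>\<V>. \<exists>U\<in>\<U>. V \<subseteq> U)"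

definition defining_sequence :: "'a topology \<Rightarrow> (nat \<Rightarrow> 'a set set) \<Rightarrow> bool" where
  "defining_sequence X \<A> \<longleftrightarrow>
     (\<forall>n. is_partition X (\<A> n)) \<and>
     (\<forall>n. refines (\<A> (Suc n)) (\<A> n)) \<and>
     (\<forall>C\<in>(\<Union>n. \<A> n). openin X C) \<and>
     (\<forall>W. openin X W \<longrightarrow> (\<exists>\<B>. \<B> \<subseteq> (\<Union>n. \<A> n) \<and> \<Union>\<B> = W))"

definition u_metric :: "(nat \<Rightarrow> 'a set set) \<Rightarrow> 'a \<Rightarrow> 'a \<Rightarrow> real" where
  "u_metric \<A> x y =
     (if x = y then 0 else 1 / (1 + real (LEAST n. cell (\<A> n) x \<noteq> cell (\<A> n) y)))"

definition diam_d :: "('a \<Rightarrow> 'a \<Rightarrow> real) \<Rightarrow> 'a set \<Rightarrow> ereal" where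
  "diam_d d C = (SUP p\<in>C \<times> C. ereal (d (fst p) (snd p)))"

definition mesh :: "('a \<Rightarrow> 'a \<Rightarrow> real) \<Rightarrow> 'a set set \<Rightarrow> ereal" where
  "mesh d \<U> = (SUP C\<in>\<U>. diam_d d C)"

definition tame :: "'a topology \<Rightarrow> (nat \<Rightarrow> 'a set set) \<Rightarrow> ('a \<Rightarrow> 'a \<Rightarrow> real) \<Rightarrow> bool" where
  "tame X \<A> d \<longleftrightarrow>
     (\<lambda>n. mesh d (\<A> n)) \<longlonglongrightarrow> 0 \<and>
     (\<forall>n. \<exists>\<rho>>0. \<forall>x1\<in>topspace X. \<forall>x2\<in>topspace X.
         cell (\<A> n) x1 \<noteq> cell (\<A> n) x2 \<longrightarrow> d x1 x2 \<ge> \<rho>)"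

definition admissible_metric :: "'a topology \<Rightarrow> ('a \<Rightarrow> 'a \<Rightarrow> real) \<Rightarrow> bool" where
  "admissible_metric X d \<longleftrightarrow>
     Metric_space (topspace X) d \<and> Metric_space.mtopology (topspace X) d = X"

definition uniformly_equivalent :: "'a set \<Rightarrow> ('a \<Rightarrow> 'a \<Rightarrow> real) \<Rightarrow> ('a \<Rightarrow> 'a \<Rightarrow> real) \<Rightarrow> bool" where
  "uniformly_equivalent S d1 d2 \<longleftrightarrow>
     (\<forall>e>0. \<exists>\<delta>>0. \<forall>x\<in>S. \<forall>y\<in>S. d1 x y < \<delta> \<longrightarrow> d2 x y < e) \<and>
     (\<forall>e>0. \<exists>\<delta>>0. \<forall>x\<in>S. \<forall>y\<in>S. d2 x y < \<delta> \<longrightarrow> d1 x y < e)"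

end

theory Submission
  imports Defs
begin

text \<open>
  For points x, y of X one has u(x,y) < 1/(n+1) exactly when x and y lie in the same cell of
  the n-th partition; this uses only that the cells separate points, i.e. that X is T0. Through this dictionary the mesh condition of tameness says that
  u-closeness forces d-closeness, and the separation condition says that d-closeness forces
  u-closeness.
\<close>

lemma partition_subset_topspace:
  "is_partition X \<U> \<Longrightarrow> C \<in> \<U> \<Longrightarrow> C \<subseteq> topspace X"
  unfolding is_partition_def by blast

lemma cell_eqI:
  assumes "is_partition X \<U>" "C \<in> \<U>" "x \<in> C"
  shows "cell \<U> x = C"
  unfolding cell_def
proof (rule the_equality)
  fix D assume "D \<in> \<U> \<and> x \<in> D"
  then show "D = C"
    using assms unfolding is_partition_def by blast
qed (use assms in blast)

lemma
  assumes "is_partition X \<U>" "x \<in> topspace X"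
  shows cell_in_partition: "cell \<U> x \<in> \<U>"
    and mem_cell: "x \<in> cell \<U> x"
proof -
  obtain C where "C \<in> \<U>" "x \<in> C"
    using assms unfolding is_partition_def by blast
  with cell_eqI[OF assms(1)] show "cell \<U> x \<in> \<U>" "x \<in> cell \<U> x"
    by simp_all
qed

lemma same_cell_iff:
  assumes "is_partition X \<U>" "x \<in> topspace X" "y \<in> topspace X"
  shows "cell \<U> x = cell \<U> y \<longleftrightarrow> (\<exists>C\<in>\<U>. x \<in> C \<and> y \<in> C)"
proof
  assume "cell \<U> x = cell \<U> y"
  then show "\<exists>C\<in>\<U>. x \<in> C \<and> y \<in> C"
    using cell_in_partition[OF assms(1,2)] mem_cell[OF assms(1)] assms(2,3) by metis
next
  assume "\<exists>C\<in>\<U>. x \<in> C \<and> y \<in> C"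
  then show "cell \<U> x = cell \<U> y"
    using cell_eqI[OF assms(1)] by metis
qed

lemma defining_sequence_partition:
  "defining_sequence X \<A> \<Longrightarrow> is_partition X (\<A> n)"
  by (simp add: defining_sequence_def)

lemma defining_sequence_refines:
  "defining_sequence X \<A> \<Longrightarrow> refines (\<A> (Suc n)) (\<A> n)"
  by (simp add: defining_sequence_def)

lemma defining_sequence_basis:
  assumes "defining_sequence X \<A>" "openin X U"
  obtains \<B> where "\<B> \<subseteq> (\<Union>n. \<A> n)" "\<Union>\<B> = U"
  using assms unfolding defining_sequence_def by (elim conjE allE impE) auto

lemma same_cell_antimono:
  assumes \<A>: "defining_sequence X \<A>" and xy: "x \<in> topspace X" "y \<in> topspace X"
    and "k \<le> n" "cell (\<A> n) x = cell (\<A> n) y"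
  shows "cell (\<A> k) x = cell (\<A> k) y"
proof -
  have step: "cell (\<A> m) x = cell (\<A> m) y" if "cell (\<A> (Suc m)) x = cell (\<A> (Suc m)) y" for m
  proof -
    obtain C where C: "C \<in> \<A> (Suc m)" "x \<in> C" "y \<in> C"
      using same_cell_iff[OF defining_sequence_partition[OF \<A>] xy] \<open>cell (\<A> (Suc m)) x = _\<close> by blast
    then obtain D where "D \<in> \<A> m" "C \<subseteq> D"
      using defining_sequence_refines[OF \<A>] unfolding refines_def by blast
    with C show ?thesis
      by (intro same_cell_iff[OF defining_sequence_partition[OF \<A>] xy, THEN iffD2]) blast
  qed
  show ?thesis
    by (rule inc_induct[where P = "\<lambda>m. cell (\<A> m) x = cell (\<A> m) y", OF assms(4,5)]) (rule step)
qed

lemma defining_sequence_separates_points: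
  assumes \<A>: "defining_sequence X \<A>" and "t0_space X"
    and xy: "x \<in> topspace X" "y \<in> topspace X" "x \<noteq> y"
  shows "\<exists>n. cell (\<A> n) x \<noteq> cell (\<A> n) y"
proof -
  have separated: "\<exists>n. cell (\<A> n) p \<noteq> cell (\<A> n) q"
    if "openin X U" "p \<in> U" "q \<notin> U" "q \<in> topspace X" for U p q
  proof -
    obtain \<B> where "\<B> \<subseteq> (\<Union>n. \<A> n)" "\<Union>\<B> = U"
      using defining_sequence_basis[OF \<A> \<open>openin X U\<close>] .
    then obtain n C where "C \<in> \<A> n" "p \<in> C" "C \<subseteq> U"
      using \<open>p \<in> U\<close> by blast
    then have "cell (\<A> n) p = C"
      using cell_eqI[OF defining_sequence_partition[OF \<A>]] by blast
    moreover have "q \<in> cell (\<A> n) q"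
      using mem_cell[OF defining_sequence_partition[OF \<A>] \<open>q \<in> topspace X\<close>] .
    ultimately show ?thesis
      using \<open>C \<subseteq> U\<close> \<open>q \<notin> U\<close> by blast
  qed
  obtain U where "openin X U" "x \<notin> U \<longleftrightarrow> y \<in> U"
    using \<open>t0_space X\<close> xy unfolding t0_space_def by blast
  then show ?thesis
    using separated[of U x y] separated[of U y x] xy by (cases "x \<in> U") auto
qed

lemma u_metric_less_iff_same_cell:
  assumes \<A>: "defining_sequence X \<A>" and "t0_space X"
    and xy: "x \<in> topspace X" "y \<in> topspace X"
  shows "u_metric \<A> x y < 1 / real (Suc n) \<longleftrightarrow> cell (\<A> n) x = cell (\<A> n) y"
proof (cases "x = y")
  case False
  define j where "j = (LEAST n. cell (\<A> n) x \<noteq> cell (\<A> n) y)"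
  have j: "cell (\<A> j) x \<noteq> cell (\<A> j) y"
    using defining_sequence_separates_points[OF assms False] unfolding j_def by (rule LeastI_ex)
  have "cell (\<A> n) x = cell (\<A> n) y \<longleftrightarrow> n < j"
  proof
    assume "cell (\<A> n) x = cell (\<A> n) y"
    then show "n < j"
      using same_cell_antimono[OF \<A> xy, of j n] j by (meson not_less)
  next
    assume "n < j"
    then show "cell (\<A> n) x = cell (\<A> n) y"
      unfolding j_def by (rule not_less_Least[THEN notnotD])
  qed
  also have "\<dots> \<longleftrightarrow> 1 / (1 + real j) < 1 / real (Suc n)"
    by (simp add: divide_simps)
  finally show ?thesis
    using False by (simp add: u_metric_def j_def)
qed (simp add: u_metric_def)

lemma dist_le_mesh:
  assumes "is_partition X \<U>" "x \<in> topspace X" "y \<in> topspace X" "cell \<U> x = cell \<U> y"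
  shows "ereal (d x y) \<le> mesh d \<U>"
proof -
  obtain C where "C \<in> \<U>" "x \<in> C" "y \<in> C"
    using same_cell_iff[OF assms(1-3), THEN iffD1, OF assms(4)] by blast
  then have "ereal (d x y) \<le> diam_d d C"
    unfolding diam_d_def by (intro SUP_upper2[of "(x, y)"]) auto
  also have "\<dots> \<le> mesh d \<U>"
    unfolding mesh_def using \<open>C \<in> \<U>\<close> by (rule SUP_upper)
  finally show ?thesis .
qed

lemma mesh_le:
  assumes "is_partition X \<U>"
    and "\<forall>x\<in>topspace X. \<forall>y\<in>topspace X. cell \<U> x = cell \<U> y \<longrightarrow> d x y \<le> e"
  shows "mesh d \<U> \<le> ereal e"
proof -
  have "d x y \<le> e" if "C \<in> \<U>" "x \<in> C" "y \<in> C" for C x y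
  proof -
    have "x \<in> topspace X" "y \<in> topspace X"
      using partition_subset_topspace[OF assms(1) \<open>C \<in> \<U>\<close>] that by auto
    moreover from this have "cell \<U> x = cell \<U> y"
      using same_cell_iff[OF assms(1)] that by blast
    ultimately show ?thesis
      using assms(2) by blast
  qed
  then show ?thesis
    unfolding mesh_def diam_d_def by (auto intro!: SUP_least)
qed

lemma mesh_tendsto_0_iff:
  assumes \<A>: "defining_sequence X \<A>" and "topspace X \<noteq> {}"
    and d0: "\<forall>x\<in>topspace X. d x x = 0"
  shows "(\<lambda>n. mesh d (\<A> n)) \<longlonglongrightarrow> 0 \<longleftrightarrow>
    (\<forall>e>0. \<exists>n. \<forall>x\<in>topspace X. \<forall>y\<in>topspace X. cell (\<A> n) x = cell (\<A> n) y \<longrightarrow> d x y < e)"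
    (is "_ \<longleftrightarrow> (\<forall>e>0. \<exists>n. ?small n e)")
proof
  assume lim: "(\<lambda>n. mesh d (\<A> n)) \<longlonglongrightarrow> 0"
  show "\<forall>e>0. \<exists>n. ?small n e"
  proof (intro allI impI)
    fix e :: real assume "e > 0"
    then have "\<forall>\<^sub>F n in sequentially. mesh d (\<A> n) < ereal e"
      using order_tendstoD(2)[OF lim] by simp
    then obtain n where n: "mesh d (\<A> n) < ereal e"
      unfolding eventually_sequentially by blast
    have "d x y < e"
      if "x \<in> topspace X" "y \<in> topspace X" "cell (\<A> n) x = cell (\<A> n) y" for x y
      using le_less_trans[OF dist_le_mesh[OF defining_sequence_partition[OF \<A>] that] n] by simp
    then show "\<exists>n. ?small n e"
      by blast
  qed
next
  assume small: "\<forall>e>0. \<exists>n. ?small n e"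
  show "(\<lambda>n. mesh d (\<A> n)) \<longlonglongrightarrow> 0"
  proof (rule order_tendstoI)
    fix a :: ereal assume "a < 0"
    obtain x where x: "x \<in> topspace X"
      using \<open>topspace X \<noteq> {}\<close> by blast
    have "0 \<le> mesh d (\<A> n)" for n
      using dist_le_mesh[OF defining_sequence_partition[OF \<A>] x x refl, where d = d] d0 x
      by (simp add: zero_ereal_def)
    then show "\<forall>\<^sub>F n in sequentially. a < mesh d (\<A> n)"
      using \<open>a < 0\<close> by (simp add: less_le_trans)
  next
    fix a :: ereal assume "0 < a"
    then obtain e where e: "0 < ereal e" "ereal e < a"
      using ereal_dense2 by blast
    then obtain N where N: "?small N e"
      using small by auto
    have "mesh d (\<A> n) \<le> ereal e" if "n \<ge> N" for n
    proof (rule mesh_le[OF defining_sequence_partition[OF \<A>]], intro ballI impI)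
      fix x y assume xy: "x \<in> topspace X" "y \<in> topspace X" "cell (\<A> n) x = cell (\<A> n) y"
      show "d x y \<le> e"
        using N same_cell_antimono[OF \<A> xy(1,2) that xy(3)] xy(1,2) by fastforce
    qed
    then show "\<forall>\<^sub>F n in sequentially. mesh d (\<A> n) < a"
      unfolding eventually_sequentially using e(2) by (blast intro: le_less_trans)
  qed
qed

lemma all_pos_iff_all_reciprocal_Suc:
  fixes P :: "real \<Rightarrow> bool"
  assumes mono: "\<And>e e'. P e \<Longrightarrow> e \<le> e' \<Longrightarrow> P e'"
  shows "(\<forall>e>0. P e) \<longleftrightarrow> (\<forall>n. P (1 / real (Suc n)))"
proof
  assume all: "\<forall>n. P (1 / real (Suc n))"
  show "\<forall>e>0. P e"
  proof (intro allI impI)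
    fix e :: real assume "e > 0"
    then obtain n where "1 / real (Suc n) < e"
      by (rule nat_approx_posE)
    then show "P e"
      using mono[OF all[rule_format, of n]] by simp
  qed
qed simp

lemma ex_pos_iff_ex_reciprocal_Suc:
  fixes P :: "real \<Rightarrow> bool"
  assumes antimono: "\<And>e e'. P e' \<Longrightarrow> e \<le> e' \<Longrightarrow> P e"
  shows "(\<exists>e>0. P e) \<longleftrightarrow> (\<exists>n. P (1 / real (Suc n)))"
proof
  assume "\<exists>e>0. P e"
  then obtain e where "e > 0" "P e"
    by blast
  moreover obtain n where "1 / real (Suc n) < e"
    using nat_approx_posE[OF \<open>e > 0\<close>] .
  ultimately show "\<exists>n. P (1 / real (Suc n))"
    using antimono by (meson less_imp_le)
next
  assume "\<exists>n. P (1 / real (Suc n))"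
  then show "\<exists>e>0. P e"
    using of_nat_0_less_iff zero_less_Suc zero_less_divide_1_iff by blast
qed

lemma uniform_to_u_metric_iff:
  fixes d :: "'a \<Rightarrow> 'a \<Rightarrow> real"
  assumes "defining_sequence X \<A>" "t0_space X"
  shows "(\<forall>e>0. \<exists>\<delta>>0. \<forall>x\<in>topspace X. \<forall>y\<in>topspace X. d x y < \<delta> \<longrightarrow> u_metric \<A> x y < e) \<longleftrightarrow>
    (\<forall>n. \<exists>\<rho>>0. \<forall>x\<in>topspace X. \<forall>y\<in>topspace X. cell (\<A> n) x \<noteq> cell (\<A> n) y \<longrightarrow> d x y \<ge> \<rho>)"
    (is "_ \<longleftrightarrow> ?cells_separated")
proof -
  have "(\<forall>e>0. \<exists>\<delta>>0. \<forall>x\<in>topspace X. \<forall>y\<in>topspace X. d x y < \<delta> \<longrightarrow> u_metric \<A> x y < e) \<longleftrightarrow>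
    (\<forall>n. \<exists>\<delta>>0. \<forall>x\<in>topspace X. \<forall>y\<in>topspace X. d x y < \<delta> \<longrightarrow> u_metric \<A> x y < 1 / real (Suc n))"
    by (rule all_pos_iff_all_reciprocal_Suc) (blast intro: less_le_trans)
  also have "\<dots> \<longleftrightarrow> ?cells_separated"
  proof -
    have "(d x y < \<delta> \<longrightarrow> u_metric \<A> x y < 1 / real (Suc n)) \<longleftrightarrow>
        (cell (\<A> n) x \<noteq> cell (\<A> n) y \<longrightarrow> d x y \<ge> \<delta>)"
      if "x \<in> topspace X" "y \<in> topspace X" for x y \<delta> n
      unfolding u_metric_less_iff_same_cell[OF assms that] by auto
    then show ?thesis
      by simp
  qed
  finally show ?thesis .
qed

lemma uniform_from_u_metric_iff:
  fixes d :: "'a \<Rightarrow> 'a \<Rightarrow> real"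
  assumes "defining_sequence X \<A>" "t0_space X"
  shows "(\<forall>e>0. \<exists>\<delta>>0. \<forall>x\<in>topspace X. \<forall>y\<in>topspace X. u_metric \<A> x y < \<delta> \<longrightarrow> d x y < e) \<longleftrightarrow>
    (\<forall>e>0. \<exists>n. \<forall>x\<in>topspace X. \<forall>y\<in>topspace X. cell (\<A> n) x = cell (\<A> n) y \<longrightarrow> d x y < e)"
proof -
  have "(\<exists>\<delta>>0. \<forall>x\<in>topspace X. \<forall>y\<in>topspace X. u_metric \<A> x y < \<delta> \<longrightarrow> d x y < e) \<longleftrightarrow>
    (\<exists>n. \<forall>x\<in>topspace X. \<forall>y\<in>topspace X. u_metric \<A> x y < 1 / real (Suc n) \<longrightarrow> d x y < e)" for e
    by (rule ex_pos_iff_ex_reciprocal_Suc) (blast intro: less_le_trans)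
  then show ?thesis
    using u_metric_less_iff_same_cell[OF assms] by simp
qed

lemma tame_iff_uniformly_equivalent_u_metric:
  fixes d :: "'a \<Rightarrow> 'a \<Rightarrow> real"
  assumes "defining_sequence X \<A>" "t0_space X" "topspace X \<noteq> {}"
    and "\<forall>x\<in>topspace X. d x x = 0"
  shows "tame X \<A> d \<longleftrightarrow> uniformly_equivalent (topspace X) d (u_metric \<A>)"
  unfolding tame_def uniformly_equivalent_def
    mesh_tendsto_0_iff[where d = d, OF assms(1,3,4)]
    uniform_to_u_metric_iff[where d = d, OF assms(1,2)]
    uniform_from_u_metric_iff[where d = d, OF assms(1,2)]
  by blast

theorem proposition3p9:
  fixes X :: "'a topology" and \<A> :: "nat \<Rightarrow> 'a set set"
  assumes "topspace X \<noteq> {}" and "separable_space X" and "metrizable_space X"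
    and "defining_sequence X \<A>"
  shows "tame X \<A> (u_metric \<A>) \<and>
         (\<forall>d. admissible_metric X d \<longrightarrow>
              (tame X \<A> d \<longleftrightarrow> uniformly_equivalent (topspace X) d (u_metric \<A>)))"
proof -
  have "t0_space X"
    using Hausdorff_imp_t0_space[OF metrizable_imp_Hausdorff_space[OF \<open>metrizable_space X\<close>]] .
  note tame_iff = tame_iff_uniformly_equivalent_u_metric[OF \<open>defining_sequence X \<A>\<close> this \<open>topspace X \<noteq> {}\<close>]
  have "tame X \<A> (u_metric \<A>)"
  proof (rule tame_iff[THEN iffD2])
    show "\<forall>x\<in>topspace X. u_metric \<A> x x = 0"
      by (simp add: u_metric_def)
    show "uniformly_equivalent (topspace X) (u_metric \<A>) (u_metric \<A>)"
      unfolding uniformly_equivalent_def by blast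
  qed
  moreover have "tame X \<A> d \<longleftrightarrow> uniformly_equivalent (topspace X) d (u_metric \<A>)"
    if "admissible_metric X d" for d
  proof (rule tame_iff)
    interpret Metric_space "topspace X" d
      using \<open>admissible_metric X d\<close> unfolding admissible_metric_def by (rule conjunct1)
    show "\<forall>x\<in>topspace X. d x x = 0"
      by simp
  qed
  ultimately show ?thesis
    by blast
qed

end
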